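(* If $G$ is the infinite king grid and $C\subseteq\mathbb{Z}^2$ is a solid-locating-dominating code in $G$, then the density $D(C)\ge 1/3$.
   Context: The infinite king grid $G=(V,E)$ has $V=\mathbb{Z}^2$, and distinct vertices $(u_1,u_2)$, $(v_1,v_2)$ are adjacent iff $|u_1-v_1|\le1$ and $|u_2-v_2|\le1$. Let $V_n=\{(x,y)\mid |x|\le n,|y|\le n\}$; the density of a code $C\subseteq V$ is $D(C)=\limsup_{n\to\infty}|C\cap V_n|/|V_n|$. $N[v]$ is the closed neighbourhood of $v$, and for a code $C$, $I(C;v)=N[v]\cap C$. A code $C$ is solid-locating-dominating if for all distinct $u,v\in V\setminus C$, $I(C;u)\setminus I(C;v)\ne\emptyset$. *)

theory Defs
  imports "HOL-Analysis.Analysis" "HOL-Library.Liminf_Limsup"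
begin

definition king_adj :: "int \<times> int \<Rightarrow> int \<times> int \<Rightarrow> bool" where
  "king_adj u v \<longleftrightarrow> u \<noteq> v \<and> \<bar>fst u - fst v\<bar> \<le> 1 \<and> \<bar>snd u - snd v\<bar> \<le> 1"

definition closed_nbhd :: "int \<times> int \<Rightarrow> (int \<times> int) set" where
  "closed_nbhd v = {u. u = v \<or> king_adj u v}"

definition I_set :: "(int \<times> int) set \<Rightarrow> int \<times> int \<Rightarrow> (int \<times> int) set" where
  "I_set C v = closed_nbhd v \<inter> C"

definition solid_locating_dominating :: "(int \<times> int) set \<Rightarrow> bool" where
  "solid_locating_dominating C \<longleftrightarrow>
     (\<forall>u v. u \<notin> C \<and> v \<notin> C \<and> u \<noteq> v \<longrightarrow> I_set C u - I_set C v \<noteq> {})"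

definition Vbox :: "nat \<Rightarrow> (int \<times> int) set" where
  "Vbox n = {(x, y). \<bar>x\<bar> \<le> int n \<and> \<bar>y\<bar> \<le> int n}"

definition density :: "(int \<times> int) set \<Rightarrow> ereal" where
  "density C = limsup (\<lambda>n. ereal (real (card (C \<inter> Vbox n)) / real (card (Vbox n))))"

end

theory Submission
  imports Defs "HOL-Real_Asymp.Real_Asymp"
begin

(* Discharging.  Each codeword c sends charge to each non-codeword king-neighbour u.  Across a grid
   edge it sends min 2 k, where k counts the codewords among the four cells completing u and c to a
   2 x 3 block; across a diagonal it sends 2 - k, where k counts the codewords among the two common
   orthogonal neighbours of u and c.  A check of the 2^8 configurations of a closed neighbourhood
   shows that a codeword sends at most 8, and that a non-codeword u receives at least 4 once the
   solid-locating condition is applied to u and each non-codeword neighbour v (some codeword lies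
   in N[u] but not in N[v]).  Counting the charges inside the box V_n then gives
   |V_n - C| <= 2 |C inter V_(n+1)|, hence |V_n| <= 3 |C inter V_(n+1)|, and since
   |V_n| / |V_(n+1)| tends to 1 the density is at least 1/3. *)

lemma discharging_card_le:
  fixes w :: "'a \<Rightarrow> 'b \<Rightarrow> nat"
  assumes "finite A" "finite B"
    and received: "\<And>u. u \<in> A \<Longrightarrow> a \<le> (\<Sum>c\<in>B. w u c)"
    and sent: "\<And>c. c \<in> B \<Longrightarrow> (\<Sum>u\<in>A. w u c) \<le> b"
  shows "a * card A \<le> b * card B"
proof -
  have "a * card A \<le> (\<Sum>u\<in>A. \<Sum>c\<in>B. w u c)"
    using sum_mono[of A "\<lambda>_. a", OF received] by (simp add: mult.commute)
  also have "\<dots> = (\<Sum>c\<in>B. \<Sum>u\<in>A. w u c)"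
    by (rule sum.swap)
  also have "\<dots> \<le> b * card B"
    using sum_mono[of B _ "\<lambda>_. b", OF sent] by (simp add: mult.commute)
  finally show ?thesis .
qed

lemma mem_closed_nbhd_iff: "w \<in> closed_nbhd v \<longleftrightarrow> \<bar>fst w - fst v\<bar> \<le> 1 \<and> \<bar>snd w - snd v\<bar> \<le> 1"
  by (cases w, cases v) (auto simp: closed_nbhd_def king_adj_def)

lemma closed_nbhd_origin:
  "closed_nbhd 0 = {(-1, -1), (-1, 0), (-1, 1), (0, -1), (0, 0), (0, 1), (1, -1), (1, 0), (1, 1)}"
proof -
  have "{-1..1::int} = {-1, 0, 1}" by auto
  moreover have "closed_nbhd 0 = {-1..1::int} \<times> {-1..1::int}"
    by (auto simp: mem_closed_nbhd_iff abs_le_iff)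
  ultimately show ?thesis by auto
qed

lemma sum_closed_nbhd_origin:
  "(\<Sum>d\<in>closed_nbhd 0. f d) = f (-1, -1) + f (-1, 0) + f (-1, 1) + f (0, -1) + f (0, 0)
     + f (0, 1) + f (1, -1) + f (1, 0) + f (1, 1)"
  by (simp add: closed_nbhd_origin add.assoc)

lemma closed_nbhd_translate: "closed_nbhd u = (\<lambda>d. d + u) ` closed_nbhd 0"
proof (intro equalityI subsetI)
  fix c assume "c \<in> closed_nbhd u"
  then show "c \<in> (\<lambda>d. d + u) ` closed_nbhd 0"
    by (intro rev_image_eqI[of "c - u"]) (auto simp: mem_closed_nbhd_iff)
qed (auto simp: mem_closed_nbhd_iff)

lemma finite_closed_nbhd: "finite (closed_nbhd u)"
  by (simp add: closed_nbhd_translate[of u] closed_nbhd_origin)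

lemma sum_closed_nbhd_translate: "(\<Sum>c\<in>closed_nbhd u. f c) = (\<Sum>d\<in>closed_nbhd 0. f (d + u))"
  by (simp add: closed_nbhd_translate[of u] sum.reindex inj_on_def)

(* For an orthogonal step d = c - u, the vector p is perpendicular to d, so u, c, u +- p and c +- p
   form a 2 x 3 block. *)
definition charge :: "(int \<times> int) set \<Rightarrow> int \<times> int \<Rightarrow> int \<times> int \<Rightarrow> nat" where
  "charge C u c =
    (if u \<notin> C \<and> c \<in> C \<and> king_adj u c then
       (let d = c - u; p = (- snd d, fst d) in
        if fst d = 0 \<or> snd d = 0
        then min 2 (of_bool (u + p \<in> C) + of_bool (u - p \<in> C) + of_bool (c + p \<in> C) + of_bool (c - p \<in> C))
        else 2 - (of_bool ((fst c, snd u) \<in> C) + of_bool ((fst u, snd c) \<in> C)))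
     else 0)"

lemma charge_eq_0_of_notin: "c \<notin> C \<Longrightarrow> charge C u c = 0"
  by (simp add: charge_def)

lemma charge_eq_0_of_notin_closed_nbhd: "u \<notin> closed_nbhd c \<Longrightarrow> charge C u c = 0"
  by (simp add: charge_def closed_nbhd_def)

lemma king_adj_translate: "king_adj (u + t) (v + t) \<longleftrightarrow> king_adj u v"
  by (auto simp: king_adj_def)

lemma charge_translate: "charge C (u + t) (c + t) = charge {v. v + t \<in> C} u c"
proof -
  have "(c + t) - (u + t) = c - u"
    and "(u + t) + p = (u + p) + t" "(u + t) - p = (u - p) + t"
    and "(c + t) + p = (c + p) + t" "(c + t) - p = (c - p) + t"
    and "(fst (c + t), snd (u + t)) = (fst c, snd u) + t"
    and "(fst (u + t), snd (c + t)) = (fst u, snd c) + t" for p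
    by (simp_all add: prod_eq_iff)
  then show ?thesis
    by (simp only: charge_def Let_def king_adj_translate mem_Collect_eq)
qed

lemma charge_sent_origin_le:
  assumes "0 \<in> D"
  shows "(\<Sum>d\<in>closed_nbhd 0. charge D d 0) \<le> 8"
  using assms unfolding sum_closed_nbhd_origin
  by (simp add: charge_def king_adj_def zero_prod_def Let_def)

lemma charge_received_origin_ge:
  assumes "0 \<notin> D"
    and "\<forall>e\<in>closed_nbhd 0. e \<noteq> 0 \<longrightarrow> e \<notin> D \<longrightarrow> (\<exists>w\<in>closed_nbhd 0. w \<in> D \<and> w \<notin> closed_nbhd e)"
  shows "4 \<le> (\<Sum>d\<in>closed_nbhd 0. charge D 0 d)"
  using assms unfolding sum_closed_nbhd_origin unfolding closed_nbhd_origin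
  apply (simp add: mem_closed_nbhd_iff zero_prod_def)
  apply (simp add: charge_def king_adj_def Let_def)
  by (cases "(1, 0) \<in> D"; cases "(-1, 0) \<in> D"; cases "(0, 1) \<in> D"; cases "(0, -1) \<in> D";
      cases "(1, 1) \<in> D"; cases "(1, -1) \<in> D"; cases "(-1, 1) \<in> D"; cases "(-1, -1) \<in> D";
      simp)

lemma charge_sent_le:
  assumes "c \<in> C"
  shows "(\<Sum>u\<in>closed_nbhd c. charge C u c) \<le> 8"
proof -
  have "(\<Sum>u\<in>closed_nbhd c. charge C u c) = (\<Sum>d\<in>closed_nbhd 0. charge {v. v + c \<in> C} d 0)"
    using charge_translate[of C _ c 0] by (simp add: sum_closed_nbhd_translate[of _ c])
  also have "\<dots> \<le> 8"
    by (rule charge_sent_origin_le) (simp add: assms)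
  finally show ?thesis .
qed

lemma solid_locating_dominating_separates:
  assumes "solid_locating_dominating C" "u \<notin> C" "v \<notin> C" "u \<noteq> v"
  shows "\<exists>w\<in>closed_nbhd u. w \<in> C \<and> w \<notin> closed_nbhd v"
  using assms unfolding solid_locating_dominating_def I_set_def by blast

lemma charge_received_ge:
  assumes sld: "solid_locating_dominating C" and u: "u \<notin> C"
  shows "4 \<le> (\<Sum>c\<in>closed_nbhd u. charge C u c)"
proof -
  let ?D = "{v. v + u \<in> C}"
  have "4 \<le> (\<Sum>d\<in>closed_nbhd 0. charge ?D 0 d)"
  proof (rule charge_received_origin_ge)
    show "0 \<notin> ?D" using u by simp
    show "\<forall>e\<in>closed_nbhd 0. e \<noteq> 0 \<longrightarrow> e \<notin> ?D \<longrightarrow> (\<exists>w\<in>closed_nbhd 0. w \<in> ?D \<and> w \<notin> closed_nbhd e)"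
    proof (intro ballI impI)
      fix e assume "e \<noteq> 0" "e \<notin> ?D"
      then obtain w where "w \<in> closed_nbhd u" "w \<in> C" "w \<notin> closed_nbhd (e + u)"
        using solid_locating_dominating_separates[OF sld u, of "e + u"] by auto
      then show "\<exists>w\<in>closed_nbhd 0. w \<in> ?D \<and> w \<notin> closed_nbhd e"
        by (intro bexI[of _ "w - u"]) (auto simp: mem_closed_nbhd_iff)
    qed
  qed
  also have "\<dots> = (\<Sum>c\<in>closed_nbhd u. charge C u c)"
    using charge_translate[of C 0 u] by (simp add: sum_closed_nbhd_translate[of _ u])
  finally show ?thesis .
qed

lemma closed_nbhd_subset_Vbox_Suc: "u \<in> Vbox n \<Longrightarrow> closed_nbhd u \<subseteq> Vbox (Suc n)"
  by (cases u) (auto simp: Vbox_def mem_closed_nbhd_iff)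

lemma Vbox_eq_Times: "Vbox n = {- int n..int n} \<times> {- int n..int n}"
  by (auto simp: Vbox_def)

lemma finite_Vbox: "finite (Vbox n)"
  by (simp add: Vbox_eq_Times)

lemma card_Vbox: "card (Vbox n) = (2 * n + 1) ^ 2"
  by (simp add: Vbox_eq_Times card_cartesian_product power2_eq_square nat_add_distrib nat_mult_distrib)

lemma card_Vbox_diff_le:
  assumes sld: "solid_locating_dominating C"
  shows "card (Vbox n - C) \<le> 2 * card (C \<inter> Vbox (Suc n))"
proof -
  have "4 * card (Vbox n - C) \<le> 8 * card (C \<inter> Vbox (Suc n))"
  proof (rule discharging_card_le[where w = "charge C"])
    show "finite (Vbox n - C)" "finite (C \<inter> Vbox (Suc n))"
      by (simp_all add: finite_Vbox)
  next
    fix u assume u: "u \<in> Vbox n - C"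
    have "4 \<le> (\<Sum>c\<in>closed_nbhd u. charge C u c)"
      using charge_received_ge[OF sld] u by simp
    also have "\<dots> = (\<Sum>c\<in>closed_nbhd u \<inter> C. charge C u c)"
      by (intro sum.mono_neutral_right) (auto simp: finite_closed_nbhd charge_eq_0_of_notin)
    also have "\<dots> \<le> (\<Sum>c\<in>C \<inter> Vbox (Suc n). charge C u c)"
      using closed_nbhd_subset_Vbox_Suc[of u n] u
      by (intro sum_mono2) (auto simp: finite_Vbox)
    finally show "4 \<le> (\<Sum>c\<in>C \<inter> Vbox (Suc n). charge C u c)" .
  next
    fix c assume c: "c \<in> C \<inter> Vbox (Suc n)"
    have "(\<Sum>u\<in>Vbox n - C. charge C u c) = (\<Sum>u\<in>(Vbox n - C) \<inter> closed_nbhd c. charge C u c)"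
      by (rule sum.mono_neutral_right) (auto simp: finite_Vbox intro!: charge_eq_0_of_notin_closed_nbhd)
    also have "\<dots> \<le> (\<Sum>u\<in>closed_nbhd c. charge C u c)"
      by (intro sum_mono2) (auto simp: finite_closed_nbhd)
    also have "\<dots> \<le> 8"
      using charge_sent_le c by blast
    finally show "(\<Sum>u\<in>Vbox n - C. charge C u c) \<le> 8" .
  qed
  then show ?thesis by simp
qed

lemma card_Vbox_le:
  assumes "solid_locating_dominating C"
  shows "card (Vbox n) \<le> 3 * card (C \<inter> Vbox (Suc n))"
proof -
  have "card (Vbox n) = card (Vbox n \<inter> C) + card (Vbox n - C)"
    using card_Int_Diff[OF finite_Vbox] by simp
  moreover have "card (Vbox n \<inter> C) \<le> card (C \<inter> Vbox (Suc n))"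
  proof (rule card_mono)
    show "finite (C \<inter> Vbox (Suc n))" by (simp add: finite_Vbox)
    show "Vbox n \<inter> C \<subseteq> C \<inter> Vbox (Suc n)" by (auto simp: Vbox_def)
  qed
  ultimately show ?thesis
    using card_Vbox_diff_le[OF assms, of n] by linarith
qed

lemma density_ge_of_card_Vbox_le:
  assumes "0 < k" and bound: "\<And>n. card (Vbox n) \<le> k * card (C \<inter> Vbox (Suc n))"
  shows "ereal (1 / real k) \<le> density C"
proof -
  define r where "r n = real (card (Vbox n)) / real (card (Vbox (Suc n))) / real k" for n
  have "(\<lambda>n. real (card (Vbox n)) / real (card (Vbox (Suc n)))) \<longlonglongrightarrow> 1"
    unfolding card_Vbox by real_asymp
  then have "r \<longlonglongrightarrow> 1 / real k"
    unfolding r_def by (intro tendsto_divide tendsto_const) (use assms(1) in auto)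
  then have "ereal (1 / real k) = limsup (\<lambda>n. ereal (r n))"
    by (intro lim_imp_Limsup[symmetric]) simp_all
  also have "\<dots> \<le> limsup (\<lambda>n. ereal (real (card (C \<inter> Vbox (n + 1))) / real (card (Vbox (n + 1)))))"
  proof (intro Limsup_mono always_eventually allI)
    fix n
    have "real (card (Vbox n)) \<le> real k * real (card (C \<inter> Vbox (Suc n)))"
      using bound[of n] by (metis of_nat_le_iff of_nat_mult)
    moreover have "0 < real (card (Vbox (Suc n)))" by (simp add: card_Vbox)
    ultimately show "ereal (r n) \<le> ereal (real (card (C \<inter> Vbox (n + 1))) / real (card (Vbox (n + 1))))"
      using assms(1) by (simp add: r_def divide_simps mult.commute)
  qed
  also have "\<dots> = density C"
    unfolding density_def by (rule limsup_shift)
  finally show ?thesis .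
qed

theorem theorem11:
  fixes C :: "(int \<times> int) set"
  assumes "solid_locating_dominating C"
  shows "density C \<ge> ereal (1 / 3)"
  using density_ge_of_card_Vbox_le[of 3 C] card_Vbox_le[OF assms] by simp

end
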